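(* In the linear regression setting of the context, let $q\ge2$, let $s_d$ be as in the context and $s_d^*=s_d/(s_d-1)$, and set $L_{s,q}:=\big\||\bm x|_s|\bm x|_{s^*}\big\|_q$ (with $1/s+1/s^*=1$). (i) If there is $K>0$ with $\|\bm u^\top\bm x\|_{\psi_2}\le K|\bm u|_2$ for all $\bm u\in\mathbb R^d$, then $L_{s_d,q}=O(d\sqrt{\log d})$. (ii) If there is $K>0$ with $\|\bm u^\top\bm x\|_{\psi_1}\le K|\bm u|_2$ for all $\bm u\in\mathbb R^d$, then $L_{s_d,q}=O(d\log d)$. (iii) If there are $p\ge2q$ and $K_p<\infty$ with $\mathbb E|x_j|^p\le K_p$ for all $1\le j\le d$, then $L_{s_d,q}=O(d^{1+\frac{1}{2q}})$. (iv) In each of the cases (i)–(iii), $L_{2,q}=O(d)$. Here the implied constants depend only on $q$ and $K$ (resp. $K_p$, $p$), not on $d$.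
   Context: Linear regression setting: $(\bm x,y)$ is a generic sample with $\bm x=(x_1,\ldots,x_d)^\top\in\mathbb R^d$ random and $y=\bm x^\top\boldsymbol\beta^*+\epsilon$, where $\epsilon$ is independent of $\bm x$, $\mathbb E\epsilon=0$, $\mathbb E|\epsilon|^q<\infty$. The loss is $g(\boldsymbol\beta,(\bm x,y))=\frac12(y-\bm x^\top\boldsymbol\beta)^2$ with gradient $\nabla g(\boldsymbol\beta,(\bm x,y))=-(y-\bm x^\top\boldsymbol\beta)\bm x$; with $L_{s,q}=\||\bm x|_s|\bm x|_{s^*}\|_q$ one has $\||\nabla g(\boldsymbol\beta,\cdot)-\nabla g(\boldsymbol\beta',\cdot)|_s\|_q\le L_{s,q}|\boldsymbol\beta-\boldsymbol\beta'|_s$. Notation: $|\bm v|_s=(\sum_i|v_i|^s)^{1/s}$, $\|X\|_q=(\mathbb E|X|^q)^{1/q}$; $s_d:=2\min\{\ell\in\mathbb N:2\ell>\log d\}$. Sub-Gaussian norm $\|v\|_{\psi_2}=\inf\{t>0:\mathbb Ee^{v^2/t^2}\le2\}$; sub-exponential norm $\|v\|_{\psi_1}=\inf\{t>0:\mathbb Ee^{|v|/t}\le2\}$. *)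

theory Defs
  imports "HOL-Probability.Probability"
begin

text \<open>l_s norm of the first d coordinates of v (vectors in R^d are nat => real, indices 0..<d).\<close>
definition lnorm :: "real \<Rightarrow> nat \<Rightarrow> (nat \<Rightarrow> real) \<Rightarrow> real" where
  "lnorm s d v = (\<Sum>i<d. \<bar>v i\<bar> powr s) powr (1 / s)"

definition conj_exp :: "real \<Rightarrow> real" where
  "conj_exp s = s / (s - 1)"

definition Lq_norm :: "'a measure \<Rightarrow> real \<Rightarrow> ('a \<Rightarrow> real) \<Rightarrow> ennreal" where
  "Lq_norm M q Y = (let I = (\<integral>\<^sup>+ \<omega>. ennreal (\<bar>Y \<omega>\<bar> powr q) \<partial>M) in
     if I = \<infinity> then \<infinity> else ennreal (enn2real I powr (1 / q)))"

text \<open>Sub-Gaussian and sub-exponential Orlicz norms (infimum over the empty set is infinity).\<close>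
definition psi2_norm :: "'a measure \<Rightarrow> ('a \<Rightarrow> real) \<Rightarrow> ereal" where
  "psi2_norm M Y = (INF t \<in> {t::real. t > 0 \<and>
      (\<integral>\<^sup>+ \<omega>. ennreal (exp ((Y \<omega>)\<^sup>2 / t\<^sup>2)) \<partial>M) \<le> 2}. ereal t)"

definition psi1_norm :: "'a measure \<Rightarrow> ('a \<Rightarrow> real) \<Rightarrow> ereal" where
  "psi1_norm M Y = (INF t \<in> {t::real. t > 0 \<and>
      (\<integral>\<^sup>+ \<omega>. ennreal (exp (\<bar>Y \<omega>\<bar> / t)) \<partial>M) \<le> 2}. ereal t)"

definition s_d :: "nat \<Rightarrow> real" where
  "s_d d = 2 * real (LEAST l::nat. 2 * real l > ln (real d))"

definition L_sq :: "'a measure \<Rightarrow> nat \<Rightarrow> ('a \<Rightarrow> nat \<Rightarrow> real) \<Rightarrow> real \<Rightarrow> real \<Rightarrow> ennreal" where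
  "L_sq M d X s q = Lq_norm M q (\<lambda>\<omega>. lnorm s d (X \<omega>) * lnorm (conj_exp s) d (X \<omega>))"

definition dotd :: "nat \<Rightarrow> (nat \<Rightarrow> real) \<Rightarrow> (nat \<Rightarrow> real) \<Rightarrow> real" where
  "dotd d u v = (\<Sum>i<d. u i * v i)"

text \<open>The sample space is fixed to nat => real, which
  suffices since every quantity depends only on the law of x.\<close>
definition rand_vec :: "(nat \<Rightarrow> real) measure \<Rightarrow> nat \<Rightarrow> ((nat \<Rightarrow> real) \<Rightarrow> nat \<Rightarrow> real) \<Rightarrow> bool" where
  "rand_vec M d X \<longleftrightarrow> prob_space M \<and> (\<forall>j<d. (\<lambda>\<omega>. X \<omega> j) \<in> borel_measurable M)"

definition subgauss_cond :: "(nat \<Rightarrow> real) measure \<Rightarrow> nat \<Rightarrow> ((nat \<Rightarrow> real) \<Rightarrow> nat \<Rightarrow> real) \<Rightarrow> real \<Rightarrow> bool" where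
  "subgauss_cond M d X K \<longleftrightarrow>
     (\<forall>u. psi2_norm M (\<lambda>\<omega>. dotd d u (X \<omega>)) \<le> ereal (K * lnorm 2 d u))"

definition subexp_cond :: "(nat \<Rightarrow> real) measure \<Rightarrow> nat \<Rightarrow> ((nat \<Rightarrow> real) \<Rightarrow> nat \<Rightarrow> real) \<Rightarrow> real \<Rightarrow> bool" where
  "subexp_cond M d X K \<longleftrightarrow>
     (\<forall>u. psi1_norm M (\<lambda>\<omega>. dotd d u (X \<omega>)) \<le> ereal (K * lnorm 2 d u))"

definition moment_cond :: "(nat \<Rightarrow> real) measure \<Rightarrow> nat \<Rightarrow> ((nat \<Rightarrow> real) \<Rightarrow> nat \<Rightarrow> real) \<Rightarrow> real \<Rightarrow> real \<Rightarrow> bool" where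
  "moment_cond M d X p Kp \<longleftrightarrow>
     (\<forall>j<d. (\<integral>\<^sup>+ \<omega>. ennreal (\<bar>X \<omega> j\<bar> powr p) \<partial>M) \<le> ennreal Kp)"

end

theory Submission
  imports Defs
begin

(* Let m = max_j |x_j|. For s = s_d we have d^(1/s) <= e, hence |x|_s <= e m, while |x|_{s*} <= |x|_1.
   Weighted AM-GM splits E (m |x|_1)^q into E m^(2q) and E |x|_1^(2q) <= d^(2q-1) sum_j E |x_j|^(2q),
   so everything reduces to bounding E m^(2q). Under a plain 2q-th moment bound, m^(2q) <= sum_j |x_j|^(2q)
   costs a factor d^(1/(2q)). Under a psi_2 (psi_1) condition the coordinates have b-th moments growing like
   sqrt b (like b) per root; truncating m at a level t and bounding the maximum by the sum of b-th powers
   with b of order log d, the factor d of the union bound is absorbed by e^b, leaving sqrt (log d) (log d).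
   For s = 2 the product of the norms is |x|_2^2, and E |x|_2^(2q) <= d^q max_j E |x_j|^(2q). *)

section \<open>Norms on \<open>\<real>\<^sup>d\<close>\<close>

lemma lnorm_nonneg: "lnorm s d v \<ge> 0"
  by (simp add: lnorm_def)

lemma powr_sum_le_card_powr_sum:
  fixes a :: "nat \<Rightarrow> real"
  assumes r: "r \<ge> 1" and nonneg: "\<And>i. i < d \<Longrightarrow> a i \<ge> 0"
  shows "(\<Sum>i<d. a i) powr r \<le> real d powr (r - 1) * (\<Sum>i<d. a i powr r)"
proof -
  define I where "I = {i. i < d \<and> a i > 0}"
  have I_sub: "I \<subseteq> {..<d}" and fin: "finite I" by (auto simp: I_def)
  have sum_I: "(\<Sum>i<d. a i) = (\<Sum>i\<in>I. a i)"
    using nonneg by (intro sum.mono_neutral_right) (force simp: I_def)+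
  show ?thesis
  proof (cases "I = {}")
    case True
    then show ?thesis using sum_I by (simp add: sum_nonneg)
  next
    case False
    define n where "n = card I"
    have n: "0 < n" "n \<le> d"
      using False fin card_mono[OF _ I_sub] by (auto simp: n_def card_gt_0_iff)
    \<comment> \<open>\<open>powr\<close> is convex only on the positive reals, hence Jensen on the positive entries.\<close>
    have "(\<Sum>i\<in>I. (1 / real n) *\<^sub>R a i) powr r \<le> (\<Sum>i\<in>I. (1 / real n) * a i powr r)"
    proof (rule convex_on_sum[OF fin False powr_convex[OF r]])
      show "(\<Sum>i\<in>I. 1 / real n) = 1" using n by (simp add: n_def)
    qed (auto simp: I_def)
    then have "((\<Sum>i\<in>I. a i) / n) powr r \<le> (\<Sum>i\<in>I. a i powr r) / n"
      by (simp add: sum_divide_distrib[symmetric] sum_distrib_left[symmetric])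
    then have "(\<Sum>i\<in>I. a i) powr r \<le> n powr r * ((\<Sum>i\<in>I. a i powr r) / n)"
      using n by (simp add: powr_divide sum_nonneg I_def divide_le_eq mult.commute)
    also have "\<dots> = n powr (r - 1) * (\<Sum>i\<in>I. a i powr r)"
      using n by (simp add: powr_diff)
    also have "\<dots> \<le> real d powr (r - 1) * (\<Sum>i<d. a i powr r)"
      using r n I_sub by (intro mult_mono powr_mono2 sum_mono2) (auto intro: sum_nonneg)
    finally show ?thesis using sum_I by simp
  qed
qed

lemma lnorm_le_card_powr_mult:
  assumes r: "r > 0" and m: "0 \<le> m" and bound: "\<And>i. i < d \<Longrightarrow> \<bar>v i\<bar> \<le> m"
  shows "lnorm r d v \<le> real d powr (1 / r) * m"
proof -
  have "(\<Sum>i<d. \<bar>v i\<bar> powr r) \<le> real d * m powr r"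
    using sum_mono[of "{..<d}" "\<lambda>i. \<bar>v i\<bar> powr r" "\<lambda>_. m powr r"] r bound
    by (simp add: powr_mono2)
  then have "lnorm r d v \<le> (real d * m powr r) powr (1 / r)"
    unfolding lnorm_def using r by (intro powr_mono2) (auto intro: sum_nonneg)
  also have "\<dots> = real d powr (1 / r) * m"
    using r m by (simp add: powr_mult powr_powr)
  finally show ?thesis .
qed

lemma lnorm_le_sum_abs:
  assumes r: "r \<ge> 1"
  shows "lnorm r d v \<le> (\<Sum>i<d. \<bar>v i\<bar>)"
proof -
  define S where "S = (\<Sum>i<d. \<bar>v i\<bar>)"
  show ?thesis
  proof (cases "S = 0")
    case True
    then have "\<forall>i<d. v i = 0" by (simp add: S_def sum_nonneg_eq_0_iff)
    then show ?thesis using r by (simp add: lnorm_def)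
  next
    case False
    then have S: "S > 0" by (simp add: S_def order_le_neq_trans sum_nonneg)
    \<comment> \<open>Each \<open>\<bar>v i\<bar> / S\<close> lies in [0,1], where raising to the power r \<ge> 1 only decreases it.\<close>
    have "\<bar>v i\<bar> powr r \<le> S powr r * (\<bar>v i\<bar> / S)" if "i < d" for i
    proof -
      have "\<bar>v i\<bar> / S \<le> 1"
        using S member_le_sum[of i "{..<d}" "\<lambda>i. \<bar>v i\<bar>"] that by (simp add: S_def)
      then have "(\<bar>v i\<bar> / S) powr r \<le> \<bar>v i\<bar> / S"
        using powr_mono'[of 1 r "\<bar>v i\<bar> / S"] r S by simp
      then show ?thesis using S by (simp add: powr_divide field_simps)
    qed
    then have "(\<Sum>i<d. \<bar>v i\<bar> powr r) \<le> (\<Sum>i<d. S powr r * (\<bar>v i\<bar> / S))"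
      by (intro sum_mono) auto
    also have "\<dots> = S powr r"
      using S by (simp add: sum_distrib_left[symmetric] sum_divide_distrib[symmetric] S_def)
    finally have "lnorm r d v \<le> (S powr r) powr (1 / r)"
      unfolding lnorm_def using r by (intro powr_mono2) (auto intro: sum_nonneg)
    then show ?thesis using r S by (simp add: powr_powr S_def)
  qed
qed

definition max_norm :: "nat \<Rightarrow> (nat \<Rightarrow> real) \<Rightarrow> real" where
  "max_norm d v = Max ((\<lambda>i. \<bar>v i\<bar>) ` {..<d})"

lemma abs_le_max_norm: "i < d \<Longrightarrow> \<bar>v i\<bar> \<le> max_norm d v"
  unfolding max_norm_def by (rule Max_ge) auto

lemma max_norm_attained:
  assumes "d \<ge> 1" obtains i where "i < d" "max_norm d v = \<bar>v i\<bar>"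
proof -
  have "(\<lambda>i. \<bar>v i\<bar>) ` {..<d} \<noteq> {}" using assms by (simp add: lessThan_empty_iff)
  from Max_in[OF _ this] show ?thesis using that unfolding max_norm_def by auto
qed

lemma max_norm_nonneg: "d \<ge> 1 \<Longrightarrow> max_norm d v \<ge> 0"
  by (metis max_norm_attained abs_ge_zero)

lemma max_norm_powr_le_sum:
  assumes "d \<ge> 1" shows "max_norm d v powr r \<le> (\<Sum>i<d. \<bar>v i\<bar> powr r)"
proof -
  obtain i where "i < d" "max_norm d v = \<bar>v i\<bar>" using max_norm_attained[OF assms] .
  then show ?thesis
    using member_le_sum[of i "{..<d}" "\<lambda>i. \<bar>v i\<bar> powr r"] by simp
qed

lemma dotd_indicator: "j < d \<Longrightarrow> dotd d (indicator {j}) v = v j"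
  by (simp add: dotd_def indicator_def if_distrib sum.delta cong: if_cong)

lemma lnorm_indicator:
  assumes "j < d" shows "lnorm s d (indicator {j}) = 1"
proof -
  have "(\<Sum>i<d. \<bar>indicator {j} i\<bar> powr s) = (\<Sum>i<d. if i = j then 1 else (0::real))"
    by (intro sum.cong) (auto simp: indicator_def)
  then show ?thesis using assms by (simp add: lnorm_def)
qed

lemma mult_le_weighted_squares:
  fixes x y \<mu> :: real
  assumes "\<mu> > 0" "x \<ge> 0" "y \<ge> 0"
  shows "x * y \<le> \<mu> * x\<^sup>2 + y\<^sup>2 / \<mu>"
proof -
  have "0 \<le> (\<mu> * x - y)\<^sup>2 / \<mu>" using assms by simp
  then have "2 * (x * y) \<le> \<mu> * x\<^sup>2 + y\<^sup>2 / \<mu>"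
    using assms by (simp add: field_simps power2_eq_square)
  moreover have "0 \<le> x * y" using assms by simp
  ultimately show ?thesis by linarith
qed

lemma powr_le_truncation:
  fixes m t a b :: real
  assumes m: "m \<ge> 0" and t: "t > 0" and ab: "0 < a" "a \<le> b"
  shows "m powr a \<le> t powr a + t powr (a - b) * m powr b"
proof (cases "m \<le> t")
  case True
  then have "m powr a \<le> t powr a" using m ab by (intro powr_mono2) auto
  then show ?thesis by (simp add: add_increasing2)
next
  case False
  then have "m powr (a - b) * m powr b \<le> t powr (a - b) * m powr b"
    using t ab by (intro mult_right_mono powr_mono2') auto
  then show ?thesis by (simp add: powr_add[symmetric] add_increasing)
qed

lemma power_le_fact_mult_exp:
  fixes y :: real assumes "y \<ge> 0" shows "y ^ n \<le> fact n * exp y"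
proof -
  have "(\<Sum>k\<in>{n}. inverse (fact k) * y ^ k) \<le> (\<Sum>k. inverse (fact k) * y ^ k)"
    using assms by (intro sum_le_suminf[OF summable_exp]) auto
  then show ?thesis by (simp add: exp_def field_simps)
qed

lemma abs_powr_even: "k \<ge> 1 \<Longrightarrow> \<bar>x\<bar> powr (2 * real k) = \<bar>x\<bar> ^ (2 * k)"
  using powr_realpow'[of "\<bar>x\<bar>" "2 * k"] by simp

lemma ln_ge_half: "d \<ge> 2 \<Longrightarrow> ln (real d) \<ge> 1 / 2"
proof -
  assume "d \<ge> 2"
  then have "ln 2 \<le> ln (real d)" by simp
  moreover have "ln (1 / 2 :: real) \<le> 1 / 2 - 1" by (rule ln_le_minus_one) simp
  ultimately show ?thesis by (simp add: ln_div)
qed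

lemma ln_less_s_d: "ln (real d) < s_d d"
proof -
  obtain n :: nat where "ln (real d) / 2 < real n" using reals_Archimedean2 by blast
  then have "\<exists>l::nat. 2 * real l > ln (real d)" by (intro exI[of _ n]) simp
  from LeastI_ex[OF this] show ?thesis unfolding s_d_def .
qed

lemma s_d_gt_one:
  assumes "d \<ge> 1" shows "s_d d > 1"
proof -
  obtain l :: nat where l: "s_d d = 2 * real l" unfolding s_d_def by blast
  have "0 \<le> ln (real d)" using assms by simp
  then have "l \<noteq> 0" using ln_less_s_d[of d] l by auto
  then show ?thesis using l by simp
qed

lemma powr_inverse_s_d_le_exp_one:
  assumes "d \<ge> 1" shows "real d powr (1 / s_d d) \<le> exp 1"
proof -
  have "real d powr (1 / s_d d) = exp (ln (real d) / s_d d)"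
    using assms by (simp add: powr_def)
  also have "\<dots> \<le> exp 1"
    using ln_less_s_d[of d] s_d_gt_one[OF assms] by simp
  finally show ?thesis .
qed

lemma nn_integral_affine_le:
  fixes f h :: "'a \<Rightarrow> real" and g :: "'b \<Rightarrow> 'a \<Rightarrow> real"
  assumes f: "f \<in> borel_measurable M" "\<And>\<omega>. f \<omega> \<ge> 0" "(\<integral>\<^sup>+\<omega>. f \<omega> \<partial>M) \<le> ennreal c"
    and g: "\<And>j. j \<in> J \<Longrightarrow> g j \<in> borel_measurable M" "\<And>j \<omega>. g j \<omega> \<ge> 0"
      "\<And>j. j \<in> J \<Longrightarrow> (\<integral>\<^sup>+\<omega>. g j \<omega> \<partial>M) \<le> ennreal c'"
    and J: "finite J" and nonneg: "a \<ge> 0" "b \<ge> 0" "c \<ge> 0" "c' \<ge> 0"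
    and h: "\<And>\<omega>. \<omega> \<in> space M \<Longrightarrow> h \<omega> \<le> a * f \<omega> + b * (\<Sum>j\<in>J. g j \<omega>)"
  shows "(\<integral>\<^sup>+\<omega>. h \<omega> \<partial>M) \<le> ennreal (a * c + b * (real (card J) * c'))"
proof -
  have "(\<integral>\<^sup>+\<omega>. h \<omega> \<partial>M) \<le>
      (\<integral>\<^sup>+\<omega>. ennreal a * f \<omega> + ennreal b * (\<Sum>j\<in>J. ennreal (g j \<omega>)) \<partial>M)"
  proof (intro nn_integral_mono)
    fix \<omega> assume "\<omega> \<in> space M"
    then have "ennreal (h \<omega>) \<le> ennreal (a * f \<omega> + b * (\<Sum>j\<in>J. g j \<omega>))"
      using h by (intro ennreal_leI) auto
    also have "\<dots> = ennreal a * f \<omega> + ennreal b * (\<Sum>j\<in>J. ennreal (g j \<omega>))"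
      using nonneg f(2) g(2) by (simp add: ennreal_mult sum_nonneg)
    finally show "ennreal (h \<omega>) \<le> \<dots>" .
  qed
  also have "\<dots> = ennreal a * (\<integral>\<^sup>+\<omega>. f \<omega> \<partial>M) + ennreal b * (\<Sum>j\<in>J. \<integral>\<^sup>+\<omega>. g j \<omega> \<partial>M)"
    using f(1) g(1) by (simp add: nn_integral_add nn_integral_cmult nn_integral_sum)
  also have "\<dots> \<le> ennreal a * ennreal c + ennreal b * (\<Sum>j\<in>J. ennreal c')"
    using f(3) g(3) by (intro add_mono mult_left_mono sum_mono) auto
  also have "\<dots> = ennreal (a * c + b * (real (card J) * c'))"
    using nonneg by (simp add: ennreal_mult ennreal_of_nat_eq_real_of_nat)
  finally show ?thesis .
qed

lemma Lq_norm_le_of_nn_integral_le: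
  assumes q: "q > 0" and c: "c \<ge> 0"
    and bound: "(\<integral>\<^sup>+\<omega>. ennreal (\<bar>Y \<omega>\<bar> powr q) \<partial>M) \<le> ennreal c"
  shows "Lq_norm M q Y \<le> ennreal (c powr (1 / q))"
proof -
  define I where "I = (\<integral>\<^sup>+\<omega>. ennreal (\<bar>Y \<omega>\<bar> powr q) \<partial>M)"
  have "I \<noteq> \<infinity>" using bound unfolding I_def by (metis ennreal_neq_top infinity_ennreal_def neq_top_trans)
  moreover have "enn2real I powr (1 / q) \<le> c powr (1 / q)"
    using bound c q by (intro powr_mono2 enn2real_leI) (auto simp: I_def)
  ultimately show ?thesis unfolding Lq_norm_def Let_def I_def[symmetric] by (simp add: ennreal_leI)
qed

lemma rand_vec_measurable:
  assumes "rand_vec M d X" "j < d" shows "(\<lambda>\<omega>. X \<omega> j) \<in> borel_measurable M"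
  using assms by (simp add: rand_vec_def)

lemma measurable_abs_powr_coordinate:
  assumes "rand_vec M d X" "j < d" shows "(\<lambda>\<omega>. \<bar>X \<omega> j\<bar> powr r) \<in> borel_measurable M"
  using rand_vec_measurable[OF assms] by measurable

lemma rand_vec_measurable_max_norm:
  assumes "rand_vec M d X" shows "(\<lambda>\<omega>. max_norm d (X \<omega>)) \<in> borel_measurable M"
  unfolding max_norm_def
  by (intro borel_measurable_Max borel_measurable_abs rand_vec_measurable[OF assms]) auto

lemma nn_integral_powr_le_one_plus:
  assumes M: "prob_space M" and f: "f \<in> borel_measurable M" and ab: "0 < a" "a \<le> b"
  shows "(\<integral>\<^sup>+\<omega>. ennreal (\<bar>f \<omega>\<bar> powr a) \<partial>M) \<le> 1 + (\<integral>\<^sup>+\<omega>. ennreal (\<bar>f \<omega>\<bar> powr b) \<partial>M)"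
proof -
  have "(\<integral>\<^sup>+\<omega>. ennreal (\<bar>f \<omega>\<bar> powr a) \<partial>M) \<le> (\<integral>\<^sup>+\<omega>. 1 + ennreal (\<bar>f \<omega>\<bar> powr b) \<partial>M)"
  proof (intro nn_integral_mono)
    fix \<omega>
    have "ennreal (\<bar>f \<omega>\<bar> powr a) \<le> ennreal (1 + \<bar>f \<omega>\<bar> powr b)"
      using powr_le_truncation[of "\<bar>f \<omega>\<bar>" 1 a b] ab by (intro ennreal_leI) simp
    then show "ennreal (\<bar>f \<omega>\<bar> powr a) \<le> 1 + ennreal (\<bar>f \<omega>\<bar> powr b)" by simp
  qed
  also have "\<dots> = 1 + (\<integral>\<^sup>+\<omega>. ennreal (\<bar>f \<omega>\<bar> powr b) \<partial>M)"
    using f by (simp add: nn_integral_add prob_space.emeasure_space_1[OF M])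
  finally show ?thesis .
qed

lemma moment_cond_mono:
  assumes X: "rand_vec M d X" and moment: "moment_cond M d X p K" and r: "0 < r" "r \<le> p"
  shows "moment_cond M d X r (1 + max K 0)"
  unfolding moment_cond_def
proof (intro allI impI)
  fix j assume j: "j < d"
  have "(\<integral>\<^sup>+\<omega>. ennreal (\<bar>X \<omega> j\<bar> powr r) \<partial>M) \<le> 1 + (\<integral>\<^sup>+\<omega>. ennreal (\<bar>X \<omega> j\<bar> powr p) \<partial>M)"
    using X r rand_vec_measurable[OF X j] by (intro nn_integral_powr_le_one_plus) (auto simp: rand_vec_def)
  also have "\<dots> \<le> 1 + ennreal K"
    using moment j by (intro add_left_mono) (simp add: moment_cond_def)
  finally show "(\<integral>\<^sup>+\<omega>. ennreal (\<bar>X \<omega> j\<bar> powr r) \<partial>M) \<le> ennreal (1 + max K 0)"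
    by (simp add: ennreal_max_0)
qed

section \<open>Moments from Orlicz norms\<close>

lemma psi2_norm_coordinate_le:
  assumes "subgauss_cond M d X K" "j < d" shows "psi2_norm M (\<lambda>\<omega>. X \<omega> j) \<le> ereal K"
proof -
  have "psi2_norm M (\<lambda>\<omega>. dotd d (indicator {j}) (X \<omega>)) \<le> ereal (K * lnorm 2 d (indicator {j}))"
    using assms(1) by (simp add: subgauss_cond_def)
  then show ?thesis using assms(2) by (simp add: dotd_indicator lnorm_indicator)
qed

lemma psi1_norm_coordinate_le:
  assumes "subexp_cond M d X K" "j < d" shows "psi1_norm M (\<lambda>\<omega>. X \<omega> j) \<le> ereal K"
proof -
  have "psi1_norm M (\<lambda>\<omega>. dotd d (indicator {j}) (X \<omega>)) \<le> ereal (K * lnorm 2 d (indicator {j}))"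
    using assms(1) by (simp add: subexp_cond_def)
  then show ?thesis using assms(2) by (simp add: dotd_indicator lnorm_indicator)
qed

text \<open>The infimum defining an Orlicz norm need not be attained, so we pass to the radius \<open>2 K\<close>.\<close>

lemma nn_integral_exp_square_le_two:
  assumes norm: "psi2_norm M Y \<le> ereal K" and K: "K > 0"
  shows "(\<integral>\<^sup>+\<omega>. ennreal (exp ((Y \<omega>)\<^sup>2 / (2 * K)\<^sup>2)) \<partial>M) \<le> 2"
proof -
  have "psi2_norm M Y < ereal (2 * K)" using norm K by (simp add: order.strict_trans1)
  then obtain t where t: "0 < t" "t < 2 * K" and int_t: "(\<integral>\<^sup>+\<omega>. ennreal (exp ((Y \<omega>)\<^sup>2 / t\<^sup>2)) \<partial>M) \<le> 2"
    unfolding psi2_norm_def INF_less_iff by auto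
  have "(Y \<omega>)\<^sup>2 / (2 * K)\<^sup>2 \<le> (Y \<omega>)\<^sup>2 / t\<^sup>2" for \<omega>
    using t by (intro divide_left_mono power_mono) auto
  then have "(\<integral>\<^sup>+\<omega>. ennreal (exp ((Y \<omega>)\<^sup>2 / (2 * K)\<^sup>2)) \<partial>M) \<le> (\<integral>\<^sup>+\<omega>. ennreal (exp ((Y \<omega>)\<^sup>2 / t\<^sup>2)) \<partial>M)"
    by (intro nn_integral_mono ennreal_leI) simp
  then show ?thesis using int_t by simp
qed

lemma nn_integral_exp_abs_le_two:
  assumes norm: "psi1_norm M Y \<le> ereal K" and K: "K > 0"
  shows "(\<integral>\<^sup>+\<omega>. ennreal (exp (\<bar>Y \<omega>\<bar> / (2 * K))) \<partial>M) \<le> 2"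
proof -
  have "psi1_norm M Y < ereal (2 * K)" using norm K by (simp add: order.strict_trans1)
  then obtain t where t: "0 < t" "t < 2 * K" and int_t: "(\<integral>\<^sup>+\<omega>. ennreal (exp (\<bar>Y \<omega>\<bar> / t)) \<partial>M) \<le> 2"
    unfolding psi1_norm_def INF_less_iff by auto
  have "\<bar>Y \<omega>\<bar> / (2 * K) \<le> \<bar>Y \<omega>\<bar> / t" for \<omega>
    using t by (intro divide_left_mono) auto
  then have "(\<integral>\<^sup>+\<omega>. ennreal (exp (\<bar>Y \<omega>\<bar> / (2 * K))) \<partial>M) \<le> (\<integral>\<^sup>+\<omega>. ennreal (exp (\<bar>Y \<omega>\<bar> / t)) \<partial>M)"
    by (intro nn_integral_mono ennreal_leI) simp
  then show ?thesis using int_t by simp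
qed

lemma nn_integral_le_of_exp_moment:
  fixes \<phi> g :: "'a \<Rightarrow> real"
  assumes \<phi>: "\<phi> \<in> borel_measurable M" "(\<integral>\<^sup>+\<omega>. ennreal (exp (\<phi> \<omega>)) \<partial>M) \<le> 2"
    and c: "c \<ge> 0" and g: "\<And>\<omega>. g \<omega> \<le> c * exp (\<phi> \<omega>)"
  shows "(\<integral>\<^sup>+\<omega>. ennreal (g \<omega>) \<partial>M) \<le> ennreal (2 * c)"
proof -
  have "(\<integral>\<^sup>+\<omega>. ennreal (g \<omega>) \<partial>M) \<le> (\<integral>\<^sup>+\<omega>. ennreal c * ennreal (exp (\<phi> \<omega>)) \<partial>M)"
    using g c by (intro nn_integral_mono) (simp add: ennreal_leI flip: ennreal_mult)
  also have "\<dots> = ennreal c * (\<integral>\<^sup>+\<omega>. ennreal (exp (\<phi> \<omega>)) \<partial>M)"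
    using \<phi>(1) by (simp add: nn_integral_cmult)
  also have "\<dots> \<le> ennreal c * 2" using \<phi>(2) by (intro mult_left_mono) auto
  finally show ?thesis using c by (simp add: ennreal_mult mult.commute)
qed

lemma nn_integral_power_le_of_psi2_norm:
  assumes Y: "Y \<in> borel_measurable M" and norm: "psi2_norm M Y \<le> ereal K" and K: "K > 0"
  shows "(\<integral>\<^sup>+\<omega>. ennreal (\<bar>Y \<omega>\<bar> ^ (2 * k)) \<partial>M) \<le> ennreal (2 * (fact k * (2 * K) ^ (2 * k)))"
proof (rule nn_integral_le_of_exp_moment[OF _ nn_integral_exp_square_le_two[OF norm K]])
  fix \<omega>
  have "\<bar>Y \<omega>\<bar> ^ (2 * k) = (2 * K) ^ (2 * k) * ((Y \<omega>)\<^sup>2 / (2 * K)\<^sup>2) ^ k"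
    using K by (simp add: power_mult power_divide)
  also have "\<dots> \<le> (2 * K) ^ (2 * k) * (fact k * exp ((Y \<omega>)\<^sup>2 / (2 * K)\<^sup>2))"
    using K by (intro mult_left_mono power_le_fact_mult_exp) auto
  finally show "\<bar>Y \<omega>\<bar> ^ (2 * k) \<le> fact k * (2 * K) ^ (2 * k) * exp ((Y \<omega>)\<^sup>2 / (2 * K)\<^sup>2)"
    by (simp add: mult_ac)
qed (use Y K in auto)

lemma nn_integral_power_le_of_psi1_norm:
  assumes Y: "Y \<in> borel_measurable M" and norm: "psi1_norm M Y \<le> ereal K" and K: "K > 0"
  shows "(\<integral>\<^sup>+\<omega>. ennreal (\<bar>Y \<omega>\<bar> ^ n) \<partial>M) \<le> ennreal (2 * (fact n * (2 * K) ^ n))"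
proof (rule nn_integral_le_of_exp_moment[OF _ nn_integral_exp_abs_le_two[OF norm K]])
  fix \<omega>
  have "\<bar>Y \<omega>\<bar> ^ n = (2 * K) ^ n * (\<bar>Y \<omega>\<bar> / (2 * K)) ^ n"
    using K by (simp add: power_divide)
  also have "\<dots> \<le> (2 * K) ^ n * (fact n * exp (\<bar>Y \<omega>\<bar> / (2 * K)))"
    using K by (intro mult_left_mono power_le_fact_mult_exp) auto
  finally show "\<bar>Y \<omega>\<bar> ^ n \<le> fact n * (2 * K) ^ n * exp (\<bar>Y \<omega>\<bar> / (2 * K))"
    by (simp add: mult_ac)
qed (use Y K in auto)

definition coord_moment_growth ::
    "(nat \<Rightarrow> real) measure \<Rightarrow> nat \<Rightarrow> ((nat \<Rightarrow> real) \<Rightarrow> nat \<Rightarrow> real) \<Rightarrow> real \<Rightarrow> real \<Rightarrow> bool" where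
  "coord_moment_growth M d X c \<alpha> \<longleftrightarrow>
     (\<forall>k::nat. k \<ge> 1 \<longrightarrow> moment_cond M d X (2 * real k) (2 * (c * real k powr \<alpha>) ^ (2 * k)))"

lemma subgauss_coord_moment_growth:
  assumes X: "rand_vec M d X" and subgauss: "subgauss_cond M d X K" and K: "K > 0"
  shows "coord_moment_growth M d X (2 * K) (1 / 2)"
  unfolding coord_moment_growth_def moment_cond_def
proof (intro allI impI)
  fix k j :: nat assume k: "k \<ge> 1" and j: "j < d"
  have "(\<integral>\<^sup>+\<omega>. ennreal (\<bar>X \<omega> j\<bar> powr (2 * real k)) \<partial>M) \<le> ennreal (2 * (fact k * (2 * K) ^ (2 * k)))"
    using nn_integral_power_le_of_psi2_norm[OF rand_vec_measurable[OF X j]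
        psi2_norm_coordinate_le[OF subgauss j] K] k
    by (simp add: abs_powr_even)
  also have "\<dots> \<le> ennreal (2 * (2 * K * real k powr (1 / 2)) ^ (2 * k))"
  proof (intro ennreal_leI)
    have "fact k \<le> (real k powr (1 / 2)) ^ (2 * k)"
      using fact_le_power[of k] by (simp add: powr_half_sqrt power_mult)
    then show "2 * (fact k * (2 * K) ^ (2 * k)) \<le> 2 * (2 * K * real k powr (1 / 2)) ^ (2 * k)"
      using K by (simp add: power_mult_distrib mult.commute)
  qed
  finally show "(\<integral>\<^sup>+\<omega>. ennreal (\<bar>X \<omega> j\<bar> powr (2 * real k)) \<partial>M)
      \<le> ennreal (2 * (2 * K * real k powr (1 / 2)) ^ (2 * k))" .
qed

lemma subexp_coord_moment_growth:
  assumes X: "rand_vec M d X" and subexp: "subexp_cond M d X K" and K: "K > 0"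
  shows "coord_moment_growth M d X (4 * K) 1"
  unfolding coord_moment_growth_def moment_cond_def
proof (intro allI impI)
  fix k j :: nat assume k: "k \<ge> 1" and j: "j < d"
  have "(\<integral>\<^sup>+\<omega>. ennreal (\<bar>X \<omega> j\<bar> powr (2 * real k)) \<partial>M) \<le> ennreal (2 * (fact (2 * k) * (2 * K) ^ (2 * k)))"
    using nn_integral_power_le_of_psi1_norm[OF rand_vec_measurable[OF X j]
        psi1_norm_coordinate_le[OF subexp j] K] k
    by (simp add: abs_powr_even)
  also have "\<dots> \<le> ennreal (2 * (4 * K * real k powr 1) ^ (2 * k))"
  proof (intro ennreal_leI)
    have "fact (2 * k) \<le> (2 * real k) ^ (2 * k)"
      using fact_le_power[of "2 * k"] by simp
    moreover have "(4 * K * real k powr 1) ^ (2 * k) = (2 * K) ^ (2 * k) * (2 * real k) ^ (2 * k)"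
      unfolding power_mult_distrib[symmetric] by (simp add: mult_ac)
    ultimately show "2 * (fact (2 * k) * (2 * K) ^ (2 * k)) \<le> 2 * (4 * K * real k powr 1) ^ (2 * k)"
      using K by (simp add: mult.commute)
  qed
  finally show "(\<integral>\<^sup>+\<omega>. ennreal (\<bar>X \<omega> j\<bar> powr (2 * real k)) \<partial>M)
      \<le> ennreal (2 * (4 * K * real k powr 1) ^ (2 * k))" .
qed

definition growth_moment_bound :: "real \<Rightarrow> real \<Rightarrow> real \<Rightarrow> real" where
  "growth_moment_bound q c \<alpha> = 1 + 2 * (c * real (nat \<lceil>q\<rceil>) powr \<alpha>) ^ (2 * nat \<lceil>q\<rceil>)"

lemma growth_moment_bound_pos: "growth_moment_bound q c \<alpha> > 0"
  by (simp add: growth_moment_bound_def add_pos_nonneg zero_le_even_power)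

lemma moment_cond_of_coord_moment_growth:
  assumes X: "rand_vec M d X" and growth: "coord_moment_growth M d X c \<alpha>" and q: "q > 0"
  shows "moment_cond M d X (2 * q) (growth_moment_bound q c \<alpha>)"
proof -
  define n where "n = nat \<lceil>q\<rceil>"
  have n: "n \<ge> 1" "q \<le> real n" using q by (auto simp: n_def Suc_le_eq)
  then have "moment_cond M d X (2 * real n) (2 * (c * real n powr \<alpha>) ^ (2 * n))"
    using growth by (simp add: coord_moment_growth_def)
  from moment_cond_mono[OF X this] show ?thesis
    using q n by (simp add: growth_moment_bound_def n_def zero_le_even_power)
qed

section \<open>Bounds on \<open>L\<^sub>s\<^sub>,\<^sub>q\<close>\<close>

lemma lnorm_mult_lnorm_conj_exp_powr_le:
  assumes d: "d \<ge> 1" and s: "s > 1" "real d powr (1 / s) \<le> exp 1" and q: "q \<ge> 1" and \<mu>: "\<mu> > 0"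
  shows "\<bar>lnorm s d v * lnorm (conj_exp s) d v\<bar> powr q \<le>
    exp q * (\<mu> * max_norm d v powr (2 * q) + real d powr (2 * q - 1) / \<mu> * (\<Sum>i<d. \<bar>v i\<bar> powr (2 * q)))"
proof -
  define m S where "m = max_norm d v" and "S = (\<Sum>i<d. \<bar>v i\<bar>)"
  have m: "m \<ge> 0" using max_norm_nonneg[OF d] by (simp add: m_def)
  have S: "S \<ge> 0" by (simp add: S_def sum_nonneg)
  have "lnorm s d v \<le> real d powr (1 / s) * m"
    using s m abs_le_max_norm by (intro lnorm_le_card_powr_mult) (auto simp: m_def)
  also have "\<dots> \<le> exp 1 * m" using s m by (intro mult_right_mono) auto
  finally have "lnorm s d v \<le> exp 1 * m" .
  moreover have "lnorm (conj_exp s) d v \<le> S"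
    unfolding S_def using s by (intro lnorm_le_sum_abs) (simp add: conj_exp_def)
  ultimately have "\<bar>lnorm s d v * lnorm (conj_exp s) d v\<bar> powr q \<le> (exp 1 * m * S) powr q"
    using q m by (intro powr_mono2) (auto simp: abs_mult lnorm_nonneg intro!: mult_mono)
  also have "\<dots> = exp q * (m powr q * S powr q)"
    using m S by (simp add: powr_mult exp_powr_real)
  also have "\<dots> \<le> exp q * (\<mu> * (m powr q)\<^sup>2 + (S powr q)\<^sup>2 / \<mu>)"
    using mult_le_weighted_squares[OF \<mu>] by (intro mult_left_mono) auto
  also have "\<dots> = exp q * (\<mu> * m powr (2 * q) + S powr (2 * q) / \<mu>)"
    by (simp add: power2_eq_square flip: powr_add)
  also have "\<dots> \<le> exp q * (\<mu> * m powr (2 * q) + real d powr (2 * q - 1) * (\<Sum>i<d. \<bar>v i\<bar> powr (2 * q)) / \<mu>)"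
    using powr_sum_le_card_powr_sum[of "2 * q" d "\<lambda>i. \<bar>v i\<bar>"] q \<mu>
    by (intro mult_left_mono add_left_mono divide_right_mono) (auto simp: S_def)
  finally show ?thesis by (simp add: m_def)
qed

lemma L_sq_le_of_max_norm_moment:
  assumes X: "rand_vec M d X" and d: "d \<ge> 1" and s: "s > 1" "real d powr (1 / s) \<le> exp 1"
    and q: "q \<ge> 1" and R: "R > 0" and B: "B \<ge> 0"
    and max_moment: "(\<integral>\<^sup>+\<omega>. ennreal (max_norm d (X \<omega>) powr (2 * q)) \<partial>M) \<le> ennreal (R powr (2 * q))"
    and moment: "moment_cond M d X (2 * q) B"
  shows "L_sq M d X s q \<le> ennreal (exp 1 * real d * R * (1 + B) powr (1 / q))"
proof -
  define t u where "t = real d powr q" and "u = R powr q"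
  have t: "t > 0" and u: "u > 0" using d R by (auto simp: t_def u_def)
  \<comment> \<open>\<open>\<mu> = (d / R)\<^sup>q\<close> balances the two terms of the weighted AM-GM split.\<close>
  define \<mu> where "\<mu> = t / u"
  have \<mu>: "\<mu> > 0" using t u by (simp add: \<mu>_def)
  have "(\<integral>\<^sup>+\<omega>. ennreal (\<bar>lnorm s d (X \<omega>) * lnorm (conj_exp s) d (X \<omega>)\<bar> powr q) \<partial>M)
      \<le> ennreal (exp q * \<mu> * R powr (2 * q)
           + exp q * (real d powr (2 * q - 1) / \<mu>) * (real (card {..<d}) * B))"
  proof (rule nn_integral_affine_le[OF _ _ max_moment])
    show "(\<lambda>\<omega>. max_norm d (X \<omega>) powr (2 * q)) \<in> borel_measurable M"
      using rand_vec_measurable_max_norm[OF X] by measurable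
    show "(\<lambda>\<omega>. \<bar>X \<omega> j\<bar> powr (2 * q)) \<in> borel_measurable M" if "j \<in> {..<d}" for j
      using measurable_abs_powr_coordinate[OF X] that by simp
    show "(\<integral>\<^sup>+\<omega>. ennreal (\<bar>X \<omega> j\<bar> powr (2 * q)) \<partial>M) \<le> ennreal B" if "j \<in> {..<d}" for j
      using moment that by (simp add: moment_cond_def)
    show "\<bar>lnorm s d (X \<omega>) * lnorm (conj_exp s) d (X \<omega>)\<bar> powr q \<le> exp q * \<mu> * max_norm d (X \<omega>) powr (2 * q)
        + exp q * (real d powr (2 * q - 1) / \<mu>) * (\<Sum>j\<in>{..<d}. \<bar>X \<omega> j\<bar> powr (2 * q))" for \<omega>
      using lnorm_mult_lnorm_conj_exp_powr_le[OF d s q \<mu>, of "X \<omega>"] by (simp add: algebra_simps)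
  qed (use \<mu> B in auto)
  also have "exp q * \<mu> * R powr (2 * q) + exp q * (real d powr (2 * q - 1) / \<mu>) * (real (card {..<d}) * B)
      = (exp 1 * real d * R) powr q * (1 + B)"
  proof -
    have "R powr (2 * q) = u * u" by (simp add: u_def flip: powr_add)
    moreover have "real d powr (2 * q - 1) * real d = t * t"
      using powr_add[of "real d" "2 * q - 1" 1] d by (simp add: t_def flip: powr_add)
    moreover have "(exp 1 * real d * R) powr q = exp q * t * u"
      using R by (simp add: t_def u_def powr_mult exp_powr_real)
    ultimately show ?thesis using t u by (simp add: \<mu>_def field_simps)
  qed
  finally have "L_sq M d X s q \<le> ennreal (((exp 1 * real d * R) powr q * (1 + B)) powr (1 / q))"
    unfolding L_sq_def using q B by (intro Lq_norm_le_of_nn_integral_le) auto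
  also have "((exp 1 * real d * R) powr q * (1 + B)) powr (1 / q) = exp 1 * real d * R * (1 + B) powr (1 / q)"
    using q R B by (simp add: powr_mult powr_powr)
  finally show ?thesis .
qed

lemma max_norm_moment_le:
  assumes X: "rand_vec M d X" and d: "d \<ge> 1" and ab: "0 < a" "a \<le> b" and t: "t > 0"
    and A: "A \<ge> 0" and moment: "moment_cond M d X b A"
  shows "(\<integral>\<^sup>+\<omega>. ennreal (max_norm d (X \<omega>) powr a) \<partial>M) \<le> ennreal (t powr a + t powr (a - b) * (real d * A))"
proof -
  have "(\<integral>\<^sup>+\<omega>. ennreal (max_norm d (X \<omega>) powr a) \<partial>M)
      \<le> ennreal (t powr a * 1 + t powr (a - b) * (real (card {..<d}) * A))"
  proof (rule nn_integral_affine_le[where f = "\<lambda>_. 1"])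
    show "(\<integral>\<^sup>+\<omega>. ennreal 1 \<partial>M) \<le> ennreal 1"
      using X by (simp add: rand_vec_def prob_space.emeasure_space_1)
    show "(\<lambda>\<omega>. \<bar>X \<omega> j\<bar> powr b) \<in> borel_measurable M" if "j \<in> {..<d}" for j
      using measurable_abs_powr_coordinate[OF X] that by simp
    show "(\<integral>\<^sup>+\<omega>. ennreal (\<bar>X \<omega> j\<bar> powr b) \<partial>M) \<le> ennreal A" if "j \<in> {..<d}" for j
      using moment that by (simp add: moment_cond_def)
    show "max_norm d (X \<omega>) powr a \<le> t powr a * 1 + t powr (a - b) * (\<Sum>j\<in>{..<d}. \<bar>X \<omega> j\<bar> powr b)" for \<omega>
      using powr_le_truncation[OF max_norm_nonneg[OF d] t ab, of "X \<omega>"]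
        max_norm_powr_le_sum[OF d, of "X \<omega>" b]
      by (simp add: order_trans mult_left_mono)
  qed (use A in auto)
  then show ?thesis by simp
qed

lemma max_norm_moment_le_of_log_moment:
  assumes X: "rand_vec M d X" and d: "d \<ge> 1" and q: "q \<ge> 1"
    and k: "q \<le> real k" "ln (real d) \<le> 2 * real k" and G: "G > 0"
    and moment: "moment_cond M d X (2 * real k) (2 * G ^ (2 * k))"
  shows "(\<integral>\<^sup>+\<omega>. ennreal (max_norm d (X \<omega>) powr (2 * q)) \<partial>M) \<le> ennreal ((4 * exp 1 * G) powr (2 * q))"
proof -
  define t where "t = 2 * exp 1 * G"
  have t: "t > 0" using G by (simp add: t_def)
  \<comment> \<open>As \<open>d \<le> e\<^bsup>2k\<^esup>\<close>, the level \<open>t\<close> absorbs the factor \<open>d\<close> of the union bound over the coordinates.\<close>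
  have absorb: "real d * (2 * G ^ (2 * k)) \<le> t powr (2 * real k)"
  proof -
    have "real d = exp (ln (real d))" using d by simp
    also have "\<dots> \<le> exp 1 ^ (2 * k)" using k(2) by (simp flip: exp_of_nat_mult)
    finally have "real d \<le> exp 1 ^ (2 * k)" .
    moreover have "(2::real) \<le> 2 ^ (2 * k)" using k(1) q by (intro self_le_power) auto
    ultimately have "real d * 2 \<le> exp 1 ^ (2 * k) * 2 ^ (2 * k)" by (intro mult_mono) auto
    then have "real d * (2 * G ^ (2 * k)) \<le> (exp 1 ^ (2 * k) * 2 ^ (2 * k)) * G ^ (2 * k)"
      using G by (simp add: mult_right_mono mult.assoc)
    also have "\<dots> = t ^ (2 * k)" by (simp add: t_def power_mult_distrib mult_ac)
    also have "\<dots> = t powr (2 * real k)" using powr_realpow[OF t, of "2 * k"] by simp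
    finally show ?thesis .
  qed
  have "(\<integral>\<^sup>+\<omega>. ennreal (max_norm d (X \<omega>) powr (2 * q)) \<partial>M)
      \<le> ennreal (t powr (2 * q) + t powr (2 * q - 2 * real k) * (real d * (2 * G ^ (2 * k))))"
    using q k G by (intro max_norm_moment_le[OF X d _ _ t _ moment]) auto
  also have "\<dots> \<le> ennreal (2 * t powr (2 * q))"
    using mult_left_mono[OF absorb, of "t powr (2 * q - 2 * real k)"]
    by (intro ennreal_leI) (simp flip: powr_add)
  also have "2 * t powr (2 * q) \<le> (4 * exp 1 * G) powr (2 * q)"
  proof -
    have "(2::real) \<le> 2 powr (2 * q)" using powr_mono[of 1 "2 * q" 2] q by simp
    then have "2 * t powr (2 * q) \<le> 2 powr (2 * q) * t powr (2 * q)" by (intro mult_right_mono) auto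
    also have "\<dots> = (4 * exp 1 * G) powr (2 * q)"
      using t powr_mult[of 2 t "2 * q"] by (simp add: t_def mult_ac)
    finally show ?thesis .
  qed
  finally show ?thesis by (simp add: ennreal_leI)
qed

lemma L_sq_s_d_le_of_moment_cond:
  assumes X: "rand_vec M d X" and d: "d \<ge> 1" and q: "q \<ge> 1" and B: "B > 0"
    and moment: "moment_cond M d X (2 * q) B"
  shows "L_sq M d X (s_d d) q
    \<le> ennreal (exp 1 * B powr (1 / (2 * q)) * (1 + B) powr (1 / q) * real d powr (1 + 1 / (2 * q)))"
proof -
  define R where "R = (real d * B) powr (1 / (2 * q))"
  have R: "R > 0" using d B by (simp add: R_def)
  have "(\<integral>\<^sup>+\<omega>. ennreal (max_norm d (X \<omega>) powr (2 * q)) \<partial>M) \<le> ennreal (0 * 0 + 1 * (real (card {..<d}) * B))"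
  proof (rule nn_integral_affine_le[where f = "\<lambda>_. 0"])
    show "(\<lambda>\<omega>. \<bar>X \<omega> j\<bar> powr (2 * q)) \<in> borel_measurable M" if "j \<in> {..<d}" for j
      using measurable_abs_powr_coordinate[OF X] that by simp
    show "(\<integral>\<^sup>+\<omega>. ennreal (\<bar>X \<omega> j\<bar> powr (2 * q)) \<partial>M) \<le> ennreal B" if "j \<in> {..<d}" for j
      using moment that by (simp add: moment_cond_def)
    show "max_norm d (X \<omega>) powr (2 * q) \<le> 0 * 0 + 1 * (\<Sum>j\<in>{..<d}. \<bar>X \<omega> j\<bar> powr (2 * q))" for \<omega>
      using max_norm_powr_le_sum[OF d] by simp
  qed (use B in auto)
  also have "0 * 0 + 1 * (real (card {..<d}) * B) = R powr (2 * q)"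
    using q d B by (simp add: R_def powr_powr)
  finally have "L_sq M d X (s_d d) q \<le> ennreal (exp 1 * real d * R * (1 + B) powr (1 / q))"
    using B by (intro L_sq_le_of_max_norm_moment[OF X d s_d_gt_one[OF d]
        powr_inverse_s_d_le_exp_one[OF d] q R _ _ moment]) auto
  also have "exp 1 * real d * R * (1 + B) powr (1 / q) = exp 1 * (1 + B) powr (1 / q) * (real d * R)"
    by (simp only: mult_ac)
  also have "real d * R = real d powr (1 + 1 / (2 * q)) * B powr (1 / (2 * q))"
    using d B by (simp add: R_def powr_mult powr_add)
  finally show ?thesis by (simp only: mult_ac)
qed

lemma L_sq_two_le_of_moment_cond:
  assumes X: "rand_vec M d X" and d: "d \<ge> 1" and q: "q \<ge> 1" and B: "B \<ge> 0"
    and moment: "moment_cond M d X (2 * q) B"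
  shows "L_sq M d X 2 q \<le> ennreal (B powr (1 / q) * real d)"
proof -
  have pointwise: "\<bar>lnorm 2 d v * lnorm (conj_exp 2) d v\<bar> powr q
      \<le> 0 * 0 + real d powr (q - 1) * (\<Sum>j\<in>{..<d}. \<bar>v j\<bar> powr (2 * q))" for v
  proof -
    define T where "T = (\<Sum>i<d. \<bar>v i\<bar> powr 2)"
    have T: "T \<ge> 0" by (simp add: T_def sum_nonneg)
    have "lnorm 2 d v * lnorm (conj_exp 2) d v = T"
      using T by (simp add: lnorm_def conj_exp_def T_def flip: powr_add)
    then have "\<bar>lnorm 2 d v * lnorm (conj_exp 2) d v\<bar> powr q = T powr q" using T by simp
    also have "\<dots> \<le> real d powr (q - 1) * (\<Sum>i<d. (\<bar>v i\<bar> powr 2) powr q)"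
      unfolding T_def using q by (intro powr_sum_le_card_powr_sum) auto
    also have "(\<Sum>i<d. (\<bar>v i\<bar> powr 2) powr q) = (\<Sum>i<d. \<bar>v i\<bar> powr (2 * q))"
      by (simp only: powr_powr)
    finally show ?thesis by simp
  qed
  have "(\<integral>\<^sup>+\<omega>. ennreal (\<bar>lnorm 2 d (X \<omega>) * lnorm (conj_exp 2) d (X \<omega>)\<bar> powr q) \<partial>M)
      \<le> ennreal (0 * 0 + real d powr (q - 1) * (real (card {..<d}) * B))"
  proof (rule nn_integral_affine_le[where f = "\<lambda>_. 0"])
    show "(\<lambda>\<omega>. \<bar>X \<omega> j\<bar> powr (2 * q)) \<in> borel_measurable M" if "j \<in> {..<d}" for j
      using measurable_abs_powr_coordinate[OF X] that by simp
    show "(\<integral>\<^sup>+\<omega>. ennreal (\<bar>X \<omega> j\<bar> powr (2 * q)) \<partial>M) \<le> ennreal B" if "j \<in> {..<d}" for j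
      using moment that by (simp add: moment_cond_def)
    show "\<bar>lnorm 2 d (X \<omega>) * lnorm (conj_exp 2) d (X \<omega>)\<bar> powr q
        \<le> 0 * 0 + real d powr (q - 1) * (\<Sum>j\<in>{..<d}. \<bar>X \<omega> j\<bar> powr (2 * q))" for \<omega>
      by (rule pointwise)
  qed (use B in auto)
  also have "0 * 0 + real d powr (q - 1) * (real (card {..<d}) * B) = real d powr q * B"
    using powr_add[of "real d" "q - 1" 1] d by (simp add: mult_ac)
  finally have "L_sq M d X 2 q \<le> ennreal ((real d powr q * B) powr (1 / q))"
    unfolding L_sq_def using q B by (intro Lq_norm_le_of_nn_integral_le) auto
  also have "(real d powr q * B) powr (1 / q) = B powr (1 / q) * real d"
    using q B by (simp add: powr_mult powr_powr)
  finally show ?thesis .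
qed

lemma L_sq_s_d_le_of_coord_moment_growth:
  assumes X: "rand_vec M d X" and d: "d \<ge> 2" and q: "q \<ge> 1" and c: "c > 0" and \<alpha>: "\<alpha> \<ge> 0"
    and growth: "coord_moment_growth M d X c \<alpha>"
  shows "L_sq M d X (s_d d) q \<le> ennreal (4 * exp 1 ^ 2 * c * (2 * q + 5) powr \<alpha>
    * (1 + growth_moment_bound q c \<alpha>) powr (1 / q) * real d * ln (real d) powr \<alpha>)"
proof -
  have d1: "d \<ge> 1" and ln_d: "ln (real d) \<ge> 1 / 2" using d ln_ge_half by auto
  \<comment> \<open>The moment order \<open>2k\<close> is of order \<open>log d\<close>, but at least \<open>2q\<close>.\<close>
  define k where "k = nat \<lceil>q\<rceil> + nat \<lceil>ln (real d)\<rceil>"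
  have "real k = real (nat \<lceil>q\<rceil>) + real (nat \<lceil>ln (real d)\<rceil>)" by (simp add: k_def)
  moreover have "q \<le> real (nat \<lceil>q\<rceil>)" "ln (real d) \<le> real (nat \<lceil>ln (real d)\<rceil>)"
    by (rule real_nat_ceiling_ge)+
  ultimately have k: "q \<le> real k" "ln (real d) \<le> 2 * real k"
    using ln_d of_nat_0_le_iff by linarith+
  then have "k \<ge> 1" using q by simp
  define G where "G = c * real k powr \<alpha>"
  have G: "G > 0" using c \<open>k \<ge> 1\<close> by (simp add: G_def)
  have "moment_cond M d X (2 * real k) (2 * G ^ (2 * k))"
    using growth \<open>k \<ge> 1\<close> by (simp add: coord_moment_growth_def G_def)
  then have "L_sq M d X (s_d d) q \<le> ennreal (exp 1 * real d * (4 * exp 1 * G) * (1 + growth_moment_bound q c \<alpha>) powr (1 / q))"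
    using q k G growth_moment_bound_pos[of q c \<alpha>]
    by (intro L_sq_le_of_max_norm_moment[OF X d1 s_d_gt_one[OF d1] powr_inverse_s_d_le_exp_one[OF d1] q]
        max_norm_moment_le_of_log_moment[OF X d1 q] moment_cond_of_coord_moment_growth[OF X growth]) auto
  also have "exp 1 * real d * (4 * exp 1 * G) * (1 + growth_moment_bound q c \<alpha>) powr (1 / q)
      \<le> 4 * exp 1 ^ 2 * c * (2 * q + 5) powr \<alpha> * (1 + growth_moment_bound q c \<alpha>) powr (1 / q)
        * real d * ln (real d) powr \<alpha>"
  proof -
    have ceiling: "real (nat \<lceil>r\<rceil>) \<le> r + 1" if "0 \<le> r" for r :: real
      using that of_int_ceiling_le_add_one[of r] by (simp add: of_nat_nat)
    have "(2 * q + 4) * (1 / 2) \<le> (2 * q + 4) * ln (real d)"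
      using q ln_d by (intro mult_left_mono) auto
    then have "real k \<le> (2 * q + 5) * ln (real d)"
      using ceiling[of q] ceiling[of "ln (real d)"] q ln_d by (simp add: k_def algebra_simps)
    then have "real k powr \<alpha> \<le> (2 * q + 5) powr \<alpha> * ln (real d) powr \<alpha>"
      using \<alpha> q ln_d by (simp add: powr_mono2 flip: powr_mult)
    then have G_le: "G \<le> c * (2 * q + 5) powr \<alpha> * ln (real d) powr \<alpha>"
      using c by (simp add: G_def mult.assoc)
    define P where "P = (1 + growth_moment_bound q c \<alpha>) powr (1 / q)"
    have "exp 1 * real d * (4 * exp 1 * G) * P = (4 * exp 1 ^ 2 * P * real d) * G"
      by (simp add: power2_eq_square mult_ac)
    also have "\<dots> \<le> (4 * exp 1 ^ 2 * P * real d) * (c * (2 * q + 5) powr \<alpha> * ln (real d) powr \<alpha>)"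
      using G_le by (intro mult_left_mono) (auto simp: P_def)
    finally show ?thesis by (simp add: P_def mult_ac)
  qed
  finally show ?thesis by (simp add: ennreal_leI)
qed

lemma L_sq_two_le_of_coord_moment_growth:
  assumes "rand_vec M d X" "d \<ge> 1" "q \<ge> 1" "coord_moment_growth M d X c \<alpha>"
  shows "L_sq M d X 2 q \<le> ennreal (growth_moment_bound q c \<alpha> powr (1 / q) * real d)"
  using assms growth_moment_bound_pos[of q c \<alpha>]
  by (intro L_sq_two_le_of_moment_cond moment_cond_of_coord_moment_growth) auto

theorem mainTheorem12:
  shows
   "(\<forall>q K. q \<ge> 2 \<longrightarrow> K > 0 \<longrightarrow> (\<exists>C. \<forall>d M X. d \<ge> 2 \<longrightarrow> rand_vec M d X \<longrightarrow> subgauss_cond M d X K \<longrightarrow>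
        L_sq M d X (s_d d) q \<le> ennreal (C * real d * sqrt (ln (real d)))))
  \<and> (\<forall>q K. q \<ge> 2 \<longrightarrow> K > 0 \<longrightarrow> (\<exists>C. \<forall>d M X. d \<ge> 2 \<longrightarrow> rand_vec M d X \<longrightarrow> subexp_cond M d X K \<longrightarrow>
        L_sq M d X (s_d d) q \<le> ennreal (C * real d * ln (real d))))
  \<and> (\<forall>q p Kp. q \<ge> 2 \<longrightarrow> p \<ge> 2 * q \<longrightarrow> (\<exists>C. \<forall>d M X. d \<ge> 1 \<longrightarrow> rand_vec M d X \<longrightarrow> moment_cond M d X p Kp \<longrightarrow>
        L_sq M d X (s_d d) q \<le> ennreal (C * real d powr (1 + 1 / (2 * q)))))
  \<and> (\<forall>q K. q \<ge> 2 \<longrightarrow> K > 0 \<longrightarrow> (\<exists>C. \<forall>d M X. d \<ge> 1 \<longrightarrow> rand_vec M d X \<longrightarrow> subgauss_cond M d X K \<longrightarrow>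
        L_sq M d X 2 q \<le> ennreal (C * real d)))
  \<and> (\<forall>q K. q \<ge> 2 \<longrightarrow> K > 0 \<longrightarrow> (\<exists>C. \<forall>d M X. d \<ge> 1 \<longrightarrow> rand_vec M d X \<longrightarrow> subexp_cond M d X K \<longrightarrow>
        L_sq M d X 2 q \<le> ennreal (C * real d)))
  \<and> (\<forall>q p Kp. q \<ge> 2 \<longrightarrow> p \<ge> 2 * q \<longrightarrow> (\<exists>C. \<forall>d M X. d \<ge> 1 \<longrightarrow> rand_vec M d X \<longrightarrow> moment_cond M d X p Kp \<longrightarrow>
        L_sq M d X 2 q \<le> ennreal (C * real d)))"
  apply (intro conjI allI impI)
  subgoal for q K
    apply (rule exI[of _ "4 * exp 1 ^ 2 * (2 * K) * (2 * q + 5) powr (1 / 2)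
        * (1 + growth_moment_bound q (2 * K) (1 / 2)) powr (1 / q)"], intro allI impI)
    subgoal for d M X
      using L_sq_s_d_le_of_coord_moment_growth[OF _ _ _ _ _ subgauss_coord_moment_growth, of M d X q K]
        powr_half_sqrt[of "ln (real d)"] by simp
    done
  subgoal for q K
    apply (rule exI[of _ "4 * exp 1 ^ 2 * (4 * K) * (2 * q + 5) powr 1
        * (1 + growth_moment_bound q (4 * K) 1) powr (1 / q)"], intro allI impI)
    subgoal for d M X
      using L_sq_s_d_le_of_coord_moment_growth[OF _ _ _ _ _ subexp_coord_moment_growth, of M d X q K]
      by simp
    done
  subgoal for q p Kp
    apply (rule exI[of _ "exp 1 * (1 + max Kp 0) powr (1 / (2 * q)) * (2 + max Kp 0) powr (1 / q)"],
        intro allI impI)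
    subgoal for d M X
      using L_sq_s_d_le_of_moment_cond[OF _ _ _ _ moment_cond_mono, of M d X q Kp p] by simp
    done
  subgoal for q K
    by (intro exI[of _ "growth_moment_bound q (2 * K) (1 / 2) powr (1 / q)"] allI impI
        L_sq_two_le_of_coord_moment_growth subgauss_coord_moment_growth) auto
  subgoal for q K
    by (intro exI[of _ "growth_moment_bound q (4 * K) 1 powr (1 / q)"] allI impI
        L_sq_two_le_of_coord_moment_growth subexp_coord_moment_growth) auto
  subgoal for q p Kp
    by (intro exI[of _ "(1 + max Kp 0) powr (1 / q)"] allI impI L_sq_two_le_of_moment_cond
        moment_cond_mono) auto
  done

end
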